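(* Let $q$ be a nonnegative continuous function on $[0,+\infty)$ with $\int_0^{+\infty}tq(t)\,dt<+\infty$, let $h$ be the solution of $h'+h^2-q=0$ with $\lim_{t\to0^+}th(t)=1$, and let $v\in C^2((0,+\infty))$ be the solution of $v''+hv'=0$ with $v'>0$ and $\lim_{t\to0^+}\frac{v(t)}{\log t}=1$. Then $\lim_{t\to+\infty}\frac{v(t)}{\log t}$ exists and $\frac1{I(q)}\le\lim_{t\to+\infty}\frac{v(t)}{\log t}\le1$. Moreover, $\log t+v(1)\ge v(t)\ge\frac1{I(q)}\log t+v(1)$ for all $t>1$.
   Context: $I(q):=\exp\left(\int_0^{+\infty}tq(t)\,dt\right)$. *)

theory Defs
  imports "HOL-Analysis.Analysis"
begin

definition Iq :: "(real \<Rightarrow> real) \<Rightarrow> real" where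
  "Iq q = exp (integral {0..} (\<lambda>t. t * q t))"

end

theory Submission
  imports Defs
begin

(* Put G(t) = t v'(t), the slope of v against ln t, and u(t) = t h(t) - 1. The two equations
   give G' = -v' u and (u/v')' = t q / v' >= 0. As u -> 0 at 0+, u < 0 somewhere would keep v'
   bounded near 0, which is incompatible with v ~ ln t; so u >= 0 and G is nonincreasing.
   Comparing v with multiples of ln t near 0 then yields G <= 1 and G(0+) = 1. Next,
   psi = ln G - u + (integral of s q(s) over [0,t]) satisfies psi' = u^2/t >= 0 and psi(0+) = 0,
   whence G >= exp (- integral of t q(t) over [0,oo)) = 1/I(q). So G decreases to a limit
   L in [1/I(q), 1], which is the limit of v / ln t by l'Hopital's rule, and integrating
   1/I(q) <= t v'(t) <= 1 over [1,t] gives the two-sided bound. *)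

lemma ln_ratio_limit_ge_of_upper_bound:
  fixes v :: "real \<Rightarrow> real"
  assumes lim: "((\<lambda>s. v s / ln s) \<longlongrightarrow> L) (at_right 0)"
    and bound: "eventually (\<lambda>s. v s \<le> C + a * ln s) (at_right 0)"
  shows "a \<le> L"
proof (rule tendsto_le[OF _ lim])
  have "((\<lambda>s. C / ln s + a) \<longlongrightarrow> 0 + a) (at_right 0)"
    by (intro tendsto_add tendsto_divide_0[OF tendsto_const]
        filterlim_mono[OF ln_at_0 at_bot_le_at_infinity order_refl]) simp
  then show "((\<lambda>s. C / ln s + a) \<longlongrightarrow> a) (at_right 0)" by simp
  have "eventually (\<lambda>s::real. ln s < 0) (at_right 0)"
    by (auto simp: eventually_at_right_field intro!: exI[of _ 1])
  then show "eventually (\<lambda>s. C / ln s + a \<le> v s / ln s) (at_right 0)"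
    using bound by eventually_elim (simp add: divide_add_eq_iff divide_right_mono_neg)
qed (simp add: trivial_limit_at_right_real)

lemma ln_ratio_limit_le_of_lower_bound:
  fixes v :: "real \<Rightarrow> real"
  assumes lim: "((\<lambda>s. v s / ln s) \<longlongrightarrow> L) (at_right 0)"
    and bound: "eventually (\<lambda>s. C + b * ln s \<le> v s) (at_right 0)"
  shows "L \<le> b"
proof -
  have "((\<lambda>s. - v s / ln s) \<longlongrightarrow> - L) (at_right 0)"
    using tendsto_minus[OF lim] by simp
  moreover have "eventually (\<lambda>s. - v s \<le> - C + (- b) * ln s) (at_right 0)"
    using bound by eventually_elim simp
  ultimately show ?thesis
    using ln_ratio_limit_ge_of_upper_bound[of "\<lambda>s. - v s"] by fastforce
qed

lemma ln_slope_lower_bound: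
  fixes v v' :: "real \<Rightarrow> real"
  assumes deriv: "\<And>x. 0 < x \<Longrightarrow> (v has_real_derivative v' x) (at x)"
    and slope: "\<And>x. a \<le> x \<Longrightarrow> x \<le> b \<Longrightarrow> c \<le> x * v' x"
    and "0 < a" "a \<le> b"
  shows "v a + c * (ln b - ln a) \<le> v b"
proof -
  have "v a - c * ln a \<le> v b - c * ln b"
  proof (rule DERIV_nonneg_imp_nondecreasing[OF \<open>a \<le> b\<close>])
    fix x assume x: "a \<le> x" "x \<le> b"
    with \<open>0 < a\<close> have "0 < x" by simp
    have "((\<lambda>s. v s - c * ln s) has_real_derivative v' x - c * (1 / x)) (at x)"
      by (intro DERIV_diff DERIV_cmult deriv DERIV_ln_divide \<open>0 < x\<close>)
    moreover have "v' x - c * (1 / x) = (x * v' x - c) / x"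
      using \<open>0 < x\<close> by (simp add: field_simps)
    ultimately show "\<exists>y. ((\<lambda>s. v s - c * ln s) has_real_derivative y) (at x) \<and> 0 \<le> y"
      using slope[OF x] \<open>0 < x\<close> by auto
  qed
  then show ?thesis by (simp add: algebra_simps)
qed

lemma ln_slope_upper_bound:
  fixes v v' :: "real \<Rightarrow> real"
  assumes deriv: "\<And>x. 0 < x \<Longrightarrow> (v has_real_derivative v' x) (at x)"
    and slope: "\<And>x. a \<le> x \<Longrightarrow> x \<le> b \<Longrightarrow> x * v' x \<le> c"
    and "0 < a" "a \<le> b"
  shows "v b \<le> v a + c * (ln b - ln a)"
proof -
  have "- v a + - c * (ln b - ln a) \<le> - v b"
  proof (rule ln_slope_lower_bound[where v = "\<lambda>s. - v s" and v' = "\<lambda>s. - v' s"])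
    show "((\<lambda>s. - v s) has_real_derivative - v' x) (at x)" if "0 < x" for x
      using DERIV_minus[OF deriv[OF that]] .
    show "- c \<le> x * - v' x" if "a \<le> x" "x \<le> b" for x
      using slope[OF that] by simp
  qed fact+
  then show ?thesis by simp
qed

lemma ln_ratio_tendsto_at_top:
  fixes v v' :: "real \<Rightarrow> real"
  assumes deriv: "\<And>x. 0 < x \<Longrightarrow> (v has_real_derivative v' x) (at x)"
    and lim: "((\<lambda>x. x * v' x) \<longlongrightarrow> L) at_top"
  shows "((\<lambda>x. v x / ln x) \<longlongrightarrow> L) at_top"
proof (rule lhospital_at_top_at_top[where f' = v' and g' = "\<lambda>x. 1 / x"])
  show "LIM x at_top. ln (x::real) :> at_top" by (rule ln_at_top)
  show "eventually (\<lambda>x. 1 / x \<noteq> (0::real)) at_top"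
    using eventually_gt_at_top[of 0] by eventually_elim simp
  show "eventually (\<lambda>x. (v has_real_derivative v' x) (at x)) at_top"
    using eventually_gt_at_top[of 0] by eventually_elim (rule deriv)
  show "eventually (\<lambda>x. (ln has_real_derivative 1 / x) (at x)) at_top"
    using eventually_gt_at_top[of 0] by eventually_elim (rule DERIV_ln_divide)
  show "((\<lambda>x. v' x / (1 / x)) \<longlongrightarrow> L) at_top"
    using lim by (simp add: mult.commute)
qed

lemma antimono_bounded_tendsto_at_top:
  fixes G :: "real \<Rightarrow> real"
  assumes anti: "\<And>a b. 0 < a \<Longrightarrow> a \<le> b \<Longrightarrow> G b \<le> G a"
    and bdd: "\<And>t. 0 < t \<Longrightarrow> m \<le> G t"
  obtains L where "(G \<longlongrightarrow> L) at_top" "m \<le> L" "\<And>t. 0 < t \<Longrightarrow> L \<le> G t"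
proof
  let ?L = "Inf (G ` {0<..})"
  have bdd_below: "bdd_below (G ` {0<..})"
    using bdd by (intro bdd_belowI2) simp
  show L_le: "?L \<le> G t" if "0 < t" for t
    using cInf_lower[OF _ bdd_below] that by simp
  show "m \<le> ?L"
    using bdd by (intro cInf_greatest) auto
  show "(G \<longlongrightarrow> ?L) at_top"
  proof (rule decreasing_tendsto)
    show "eventually (\<lambda>x. ?L \<le> G x) at_top"
      using eventually_gt_at_top[of 0] by eventually_elim (rule L_le)
  next
    fix y assume "?L < y"
    then obtain t where t: "0 < t" "G t < y"
      using cInf_less_iff[OF _ bdd_below] by auto
    show "eventually (\<lambda>x. G x < y) at_top"
      using eventually_ge_at_top[of t] by eventually_elim (use anti[OF \<open>0 < t\<close>] \<open>G t < y\<close> in fastforce)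
  qed
qed

lemma integral_has_real_derivative_interior:
  fixes f :: "real \<Rightarrow> real"
  assumes "continuous_on {a..} f" "a < x"
  shows "((\<lambda>t. integral {a..t} f) has_real_derivative f x) (at x)"
proof -
  have "((\<lambda>t. integral {a..t} f) has_real_derivative f x) (at x within {a..x+1})"
    using assms by (intro integral_has_real_derivative continuous_on_subset[OF assms(1)]) auto
  moreover have "x \<in> interior {a..x+1}" using assms by simp
  ultimately show ?thesis by (metis at_within_interior)
qed

locale riccati_log_solution =
  fixes q h v v' :: "real \<Rightarrow> real"
  assumes q_cont: "continuous_on {0..} q"
    and q_nonneg: "\<And>t. 0 \<le> t \<Longrightarrow> 0 \<le> q t"
    and h_deriv: "\<And>t. 0 < t \<Longrightarrow> (h has_real_derivative q t - (h t)\<^sup>2) (at t)"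
    and th_tendsto: "((\<lambda>t. t * h t) \<longlongrightarrow> 1) (at_right 0)"
    and v_deriv: "\<And>t. 0 < t \<Longrightarrow> (v has_real_derivative v' t) (at t)"
    and v'_deriv: "\<And>t. 0 < t \<Longrightarrow> (v' has_real_derivative - h t * v' t) (at t)"
    and v'_pos: "\<And>t. 0 < t \<Longrightarrow> 0 < v' t"
    and v_ln_ratio: "((\<lambda>t. v t / ln t) \<longlongrightarrow> 1) (at_right 0)"
begin

definition u :: "real \<Rightarrow> real" where "u t = t * h t - 1"

definition G :: "real \<Rightarrow> real" where "G t = t * v' t"

lemma u_tendsto_0: "(u \<longlongrightarrow> 0) (at_right 0)"
  using tendsto_diff[OF th_tendsto tendsto_const[of 1]] by (simp add: u_def[abs_def])

lemma u_deriv: "0 < t \<Longrightarrow> (u has_real_derivative h t + t * (q t - (h t)\<^sup>2)) (at t)"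
  unfolding u_def[abs_def] by (auto intro!: derivative_eq_intros h_deriv)

lemma G_pos: "0 < t \<Longrightarrow> 0 < G t"
  using v'_pos by (simp add: G_def)

lemma G_deriv: "0 < t \<Longrightarrow> (G has_real_derivative - v' t * u t) (at t)"
  unfolding G_def[abs_def] using DERIV_mult[OF DERIV_ident v'_deriv]
  by (rule DERIV_cong) (simp_all add: u_def algebra_simps)

lemma u_div_v'_mono:
  assumes "0 < a" "a \<le> b"
  shows "u a / v' a \<le> u b / v' b"
proof (rule DERIV_nonneg_imp_nondecreasing[OF \<open>a \<le> b\<close>])
  fix x assume "a \<le> x" "x \<le> b"
  with \<open>0 < a\<close> have x: "0 < x" by simp
  have "v' x \<noteq> 0" using v'_pos[OF x] by simp
  have "((\<lambda>t. u t / v' t) has_real_derivative x * q x / v' x) (at x)"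
    using DERIV_divide[OF u_deriv[OF x] v'_deriv[OF x] \<open>v' x \<noteq> 0\<close>]
    by (rule DERIV_cong) (simp add: u_def field_simps power2_eq_square)
  moreover have "0 \<le> x * q x / v' x"
    using x v'_pos[OF x] q_nonneg[of x] by simp
  ultimately show "\<exists>y. ((\<lambda>t. u t / v' t) has_real_derivative y) (at x) \<and> 0 \<le> y"
    by blast
qed

lemma u_nonneg:
  assumes "0 < t"
  shows "0 \<le> u t"
proof (rule ccontr)
  assume "\<not> 0 \<le> u t"
  define c where "c = - (u t / v' t)"
  have "0 < c"
    using \<open>\<not> 0 \<le> u t\<close> v'_pos[OF \<open>0 < t\<close>] by (simp add: c_def divide_neg_pos)
  obtain b where "0 < b" and u_gt: "\<And>s. 0 < s \<Longrightarrow> s < b \<Longrightarrow> - c < u s"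
    using order_tendstoD(1)[OF u_tendsto_0, of "- c"] \<open>0 < c\<close>
    by (auto simp: eventually_at_right_field)
  define \<delta> where "\<delta> = min (b/2) (min t (1/2))"
  have \<delta>: "0 < \<delta>" "\<delta> < b" "\<delta> \<le> t" "\<delta> \<le> 1/2"
    using \<open>0 < b\<close> \<open>0 < t\<close> by (auto simp: \<delta>_def)
  \<comment> \<open>\<open>u / v' \<le> -c\<close> near \<open>0\<close> while \<open>u \<rightarrow> 0\<close>, so \<open>v' < 1\<close> there and \<open>v\<close> falls off at most like \<open>ln s / 2\<close>\<close>
  have slope: "s * v' s \<le> 1/2" if "0 < s" "s \<le> \<delta>" for s
  proof -
    have "u s / v' s \<le> - c"
      using u_div_v'_mono[of s t] that \<delta> by (simp add: c_def)
    then have "- c < - c * v' s"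
      using u_gt[OF \<open>0 < s\<close>] that \<delta> v'_pos[OF \<open>0 < s\<close>] by (simp add: divide_le_eq)
    then have "s * v' s \<le> s" using \<open>0 < c\<close> \<open>0 < s\<close> by simp
    then show ?thesis using that \<delta> by linarith
  qed
  have "eventually (\<lambda>s. v \<delta> - ln \<delta> / 2 + 1/2 * ln s \<le> v s) (at_right 0)"
    using \<open>0 < \<delta>\<close> unfolding eventually_at_right_field
  proof (intro exI[of _ \<delta>] conjI allI impI)
    fix s assume "0 < s" "s < \<delta>"
    then have "v \<delta> \<le> v s + 1/2 * (ln \<delta> - ln s)"
      by (intro ln_slope_upper_bound[OF v_deriv] slope) auto
    then show "v \<delta> - ln \<delta> / 2 + 1/2 * ln s \<le> v s" by (simp add: diff_divide_distrib)
  qed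
  from ln_ratio_limit_le_of_lower_bound[OF v_ln_ratio this] show False by simp
qed

lemma G_antimono:
  assumes "0 < a" "a \<le> b"
  shows "G b \<le> G a"
proof (rule DERIV_nonpos_imp_nonincreasing[OF \<open>a \<le> b\<close>])
  fix x assume "a \<le> x" "x \<le> b"
  with \<open>0 < a\<close> have x: "0 < x" by simp
  show "\<exists>y. (G has_real_derivative y) (at x) \<and> y \<le> 0"
    using G_deriv[OF x] v'_pos[OF x] u_nonneg[OF x] by (intro exI conjI) (auto simp: mult_nonneg_nonneg)
qed

lemma G_le_1:
  assumes "0 < t"
  shows "G t \<le> 1"
proof -
  have "eventually (\<lambda>s. v s \<le> v t - G t * ln t + G t * ln s) (at_right 0)"
    using \<open>0 < t\<close> unfolding eventually_at_right_field
  proof (intro exI[of _ t] conjI allI impI)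
    fix s assume "0 < s" "s < t"
    then have "v s + G t * (ln t - ln s) \<le> v t"
      by (intro ln_slope_lower_bound[OF v_deriv]) (auto simp: G_def[symmetric] intro: G_antimono)
    then show "v s \<le> v t - G t * ln t + G t * ln s" by (simp add: algebra_simps)
  qed
  then show ?thesis by (rule ln_ratio_limit_ge_of_upper_bound[OF v_ln_ratio])
qed

lemma G_tendsto_1: "(G \<longlongrightarrow> 1) (at_right 0)"
proof (rule increasing_tendsto)
  show "eventually (\<lambda>s. G s \<le> 1) (at_right 0)"
    by (auto simp: eventually_at_right_field G_le_1 intro: exI[of _ 1])
next
  fix b :: real assume "b < 1"
  have "\<exists>s0>0. b < G s0"
  proof (rule ccontr)
    assume "\<not> (\<exists>s0>0. b < G s0)"
    then have G_le_b: "G s \<le> b" if "0 < s" for s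
      using that by (meson not_less)
    have "eventually (\<lambda>s. v 1 + b * ln s \<le> v s) (at_right 0)"
      unfolding eventually_at_right_field
    proof (intro exI[of _ 1] conjI allI impI)
      fix s :: real assume "0 < s" "s < 1"
      then have "v 1 \<le> v s + b * (ln 1 - ln s)"
        by (intro ln_slope_upper_bound[OF v_deriv]) (auto simp: G_def[symmetric] intro: G_le_b)
      then show "v 1 + b * ln s \<le> v s" by simp
    qed simp
    from ln_ratio_limit_le_of_lower_bound[OF v_ln_ratio this] \<open>b < 1\<close> show False by simp
  qed
  then obtain s0 where "0 < s0" "b < G s0" by blast
  then show "eventually (\<lambda>s. b < G s) (at_right 0)"
    using \<open>0 < s0\<close> unfolding eventually_at_right_field
  proof (intro exI[of _ s0] conjI allI impI)
    fix s assume "0 < s" "s < s0"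
    then show "b < G s"
      using G_antimono[of s s0] \<open>b < G s0\<close> by simp
  qed
qed

lemma ln_G_ge:
  assumes "0 < t"
  shows "u t - integral {0..t} (\<lambda>s. s * q s) \<le> ln (G t)"
proof -
  define Q where "Q t = integral {0..t} (\<lambda>s. s * q s)" for t
  define \<psi> where "\<psi> t = ln (G t) - u t + Q t" for t
  have tq_cont: "continuous_on {0..} (\<lambda>s. s * q s)"
    by (intro continuous_intros q_cont)
  have Q_nonneg: "0 \<le> Q s" if "0 \<le> s" for s
    unfolding Q_def using q_nonneg
    by (intro integral_nonneg integrable_continuous_interval continuous_on_subset[OF tq_cont]) auto
  have \<psi>_mono: "\<psi> s \<le> \<psi> t" if "0 < s" "s \<le> t" for s
  proof (rule DERIV_nonneg_imp_nondecreasing[OF \<open>s \<le> t\<close>])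
    fix x assume "s \<le> x" "x \<le> t"
    with \<open>0 < s\<close> have x: "0 < x" by simp
    have Q_deriv: "(Q has_real_derivative x * q x) (at x)"
      unfolding Q_def[abs_def] using integral_has_real_derivative_interior[OF tq_cont x] by simp
    have "(\<psi> has_real_derivative (u x)\<^sup>2 / x) (at x)"
      unfolding \<psi>_def[abs_def]
      using DERIV_add[OF DERIV_diff[OF DERIV_chain2[OF DERIV_ln_divide[OF G_pos[OF x]] G_deriv[OF x]]
            u_deriv[OF x]] Q_deriv]
      by (rule DERIV_cong) (use x v'_pos[OF x] in \<open>simp add: G_def u_def field_simps power2_eq_square\<close>)
    then show "\<exists>y. (\<psi> has_real_derivative y) (at x) \<and> 0 \<le> y"
      using x by (intro exI conjI) auto
  qed
  \<comment> \<open>\<open>\<psi> \<ge> ln G - u\<close>, and \<open>ln G - u\<close> vanishes at \<open>0\<^sup>+\<close>\<close>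
  have "((\<lambda>s. ln (G s) - u s) \<longlongrightarrow> 0) (at_right 0)"
    using tendsto_diff[OF tendsto_ln[OF G_tendsto_1] u_tendsto_0] by simp
  moreover have "eventually (\<lambda>s. ln (G s) - u s \<le> \<psi> t) (at_right 0)"
    using \<open>0 < t\<close> unfolding eventually_at_right_field
  proof (intro exI[of _ t] conjI allI impI)
    fix s assume "0 < s" "s < t"
    then have "ln (G s) - u s \<le> \<psi> s"
      using Q_nonneg[of s] by (simp add: \<psi>_def)
    also have "\<dots> \<le> \<psi> t"
      using \<psi>_mono \<open>0 < s\<close> \<open>s < t\<close> by simp
    finally show "ln (G s) - u s \<le> \<psi> t" .
  qed
  ultimately have "0 \<le> \<psi> t"
    using tendsto_upperbound trivial_limit_at_right_real by blast
  then show ?thesis by (simp add: \<psi>_def Q_def)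
qed

lemma inv_Iq_le_G:
  assumes q_int: "(\<lambda>t. t * q t) integrable_on {0..}" and "0 < t"
  shows "1 / Iq q \<le> G t"
proof -
  have "integral {0..t} (\<lambda>s. s * q s) \<le> integral {0..} (\<lambda>s. s * q s)"
    using q_nonneg
    by (intro integral_subset_le integrable_continuous_interval q_int continuous_intros
        continuous_on_subset[OF q_cont]) auto
  then have "- integral {0..} (\<lambda>s. s * q s) \<le> ln (G t)"
    using ln_G_ge[OF \<open>0 < t\<close>] u_nonneg[OF \<open>0 < t\<close>] by linarith
  then have "exp (- integral {0..} (\<lambda>s. s * q s)) \<le> G t"
    using G_pos[OF \<open>0 < t\<close>] by (simp add: ln_ge_iff)
  then show ?thesis by (simp add: Iq_def exp_minus inverse_eq_divide)
qed

end

theorem lemma4p2: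
  fixes q h h' v v' v'' :: "real \<Rightarrow> real"
  assumes q_cont: "continuous_on {0..} q"
    and q_nonneg: "\<And>t. t \<ge> 0 \<Longrightarrow> q t \<ge> 0"
    and q_int: "(\<lambda>t. t * q t) integrable_on {0..}"
    and h_deriv: "\<And>t. t > 0 \<Longrightarrow> (h has_real_derivative h' t) (at t)"
    and h_ode: "\<And>t. t > 0 \<Longrightarrow> h' t + (h t)\<^sup>2 - q t = 0"
    and h_lim: "((\<lambda>t. t * h t) \<longlongrightarrow> 1) (at_right 0)"
    and v_deriv: "\<And>t. t > 0 \<Longrightarrow> (v has_real_derivative v' t) (at t)"
    and v'_deriv: "\<And>t. t > 0 \<Longrightarrow> (v' has_real_derivative v'' t) (at t)"
    and v''_cont: "continuous_on {0<..} v''"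
    and v_ode: "\<And>t. t > 0 \<Longrightarrow> v'' t + h t * v' t = 0"
    and v'_pos: "\<And>t. t > 0 \<Longrightarrow> v' t > 0"
    and v_lim: "((\<lambda>t. v t / ln t) \<longlongrightarrow> 1) (at_right 0)"
  shows "\<exists>L. ((\<lambda>t. v t / ln t) \<longlongrightarrow> L) at_top
            \<and> 1 / Iq q \<le> L \<and> L \<le> 1
            \<and> (\<forall>t>1. ln t + v 1 \<ge> v t \<and> v t \<ge> ln t / Iq q + v 1)"
proof -
  have h_riccati: "(h has_real_derivative q t - (h t)\<^sup>2) (at t)" if "0 < t" for t
    using h_deriv[OF that] by (rule DERIV_cong) (use h_ode[OF that] in linarith)
  have v'_linear: "(v' has_real_derivative - h t * v' t) (at t)" if "0 < t" for t
    using v'_deriv[OF that] by (rule DERIV_cong) (use v_ode[OF that] in linarith)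
  interpret riccati_log_solution q h v v'
    using q_cont q_nonneg h_riccati h_lim v_deriv v'_linear v'_pos v_lim
    by unfold_locales auto
  obtain L where G_lim: "(G \<longlongrightarrow> L) at_top" and "1 / Iq q \<le> L"
    and L_le_G: "\<And>t. 0 < t \<Longrightarrow> L \<le> G t"
    using antimono_bounded_tendsto_at_top[of G "1 / Iq q", OF G_antimono inv_Iq_le_G[OF q_int]] by blast
  have "L \<le> 1"
    using L_le_G[of 1] G_le_1[of 1] by simp
  have "((\<lambda>t. v t / ln t) \<longlongrightarrow> L) at_top"
    using ln_ratio_tendsto_at_top[OF v_deriv] G_lim by (simp add: G_def[abs_def])
  moreover have "v t \<le> ln t + v 1 \<and> ln t / Iq q + v 1 \<le> v t" if "1 < t" for t
  proof
    have "v t \<le> v 1 + 1 * (ln t - ln 1)"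
      using that by (intro ln_slope_upper_bound[OF v_deriv]) (auto simp: G_def[symmetric] intro: G_le_1)
    then show "v t \<le> ln t + v 1" by simp
    have "v 1 + 1 / Iq q * (ln t - ln 1) \<le> v t"
      using that
      by (intro ln_slope_lower_bound[OF v_deriv]) (auto simp: G_def[symmetric] intro: inv_Iq_le_G[OF q_int])
    then show "ln t / Iq q + v 1 \<le> v t" by simp
  qed
  ultimately show ?thesis
    using \<open>1 / Iq q \<le> L\<close> \<open>L \<le> 1\<close> by blast
qed

end
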